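(* Let $-\infty<a<b<\infty$, let $y:[a,b]\to\mathbb{R}$ be $L$-Lipschitz and let $\gamma=\{t+iy(t):t\in[a,b]\}$. Let $\mu$ be a nonnegative measure with total mass $\beta<1$ on an open set $U\subset\mathbb{C}$ containing $\gamma$, and let $\varphi(z)=\int\log|z-\zeta|\,d\mu(\zeta)$. Then $$\int_\gamma e^{-\varphi}\,ds<C_{L,\beta,a,b},$$ where $C_{L,\beta,a,b}>0$ is a constant depending only on $L,\beta,a,b$.
   Context: $ds$ is arc length on $\gamma$: $\int_\gamma h\,ds=\int_a^b h(\gamma(t))|\gamma'(t)|dt$ with $\gamma(t)=t+iy(t)$, $|\gamma'(t)|=\sqrt{1+y'(t)^2}$. *)

theory Defs
  imports "HOL-Analysis.Analysis"
begin

text \<open>Logarithmic potential phi(z) = integral of log|z - zeta| d mu(zeta), as an extended real: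
  positive part minus negative part (the singular point zeta = z contributes +infinity
  to the negative part).\<close>
definition log_potential :: "complex measure \<Rightarrow> complex \<Rightarrow> ereal" where
  "log_potential \<mu> z =
     enn2ereal (\<integral>\<^sup>+ \<zeta>. ennreal (max 0 (ln (cmod (z - \<zeta>)))) \<partial>\<mu>)
   - enn2ereal (\<integral>\<^sup>+ \<zeta>. (if \<zeta> = z then \<infinity> else ennreal (max 0 (- ln (cmod (z - \<zeta>))))) \<partial>\<mu>)"

definition exp_neg_ereal :: "ereal \<Rightarrow> ennreal" where
  "exp_neg_ereal x = (case x of ereal r \<Rightarrow> ennreal (exp (- r)) | PInfty \<Rightarrow> 0 | MInfty \<Rightarrow> \<infinity>)"

text \<open>Arc-length integral over the graph gamma(t) = t + i y(t), t in [a,b]: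
  integral of h(gamma(t)) |gamma'(t)| dt with |gamma'(t)| = sqrt(1 + y'(t)^2).\<close>
definition graph_arc_integral :: "real \<Rightarrow> real \<Rightarrow> (real \<Rightarrow> real) \<Rightarrow> (complex \<Rightarrow> ennreal) \<Rightarrow> ennreal" where
  "graph_arc_integral a b y h =
     (\<integral>\<^sup>+ t \<in> {a..b}. h (Complex t (y t)) * ennreal (sqrt (1 + (deriv y t)\<^sup>2)) \<partial>lebesgue)"

end

theory Submission
  imports Defs
begin

text \<open>Splitting \<open>\<phi>\<close> into its positive and negative parts gives
  \<open>exp (-\<phi> z) \<le> exp (\<integral> log\<^sup>+ (1 / |z - \<zeta>|) d\<mu>(\<zeta>))\<close>, and Jensen's inequality for the
  probability measure \<open>\<mu> / \<beta>\<close> bounds this by \<open>\<beta>\<^sup>-\<^sup>1 \<integral> max 1 (|z - \<zeta>| powr -\<beta>) d\<mu>(\<zeta>)\<close>.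
  Since \<open>|z - \<zeta>| \<ge> |Re z - Re \<zeta>|\<close>, at \<open>z = t + i y(t)\<close> this is at most
  \<open>\<beta>\<^sup>-\<^sup>1 \<integral> (1 + |t - Re \<zeta>| powr -\<beta>) d\<mu>(\<zeta>)\<close>, which no longer depends on \<open>y\<close>.
  By Tonelli, integrating over \<open>t \<in> [a, b]\<close> costs each \<open>\<zeta>\<close> at most \<open>2 (b - a) + 2 / (1 - \<beta>)\<close>,
  because \<open>\<beta> < 1\<close> makes \<open>|s| powr -\<beta>\<close> locally integrable, and the factor \<open>\<beta>\<^sup>-\<^sup>1\<close> cancels
  the total mass \<open>\<beta>\<close>. The arc length element \<open>sqrt (1 + y'\<^sup>2)\<close> is at most \<open>sqrt (1 + L\<^sup>2)\<close>
  wherever \<open>y\<close> is differentiable. For \<open>\<beta> = 0\<close> the potential vanishes.\<close>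

lemma abs_DERIV_le_lipschitz:
  fixes y :: "real \<Rightarrow> real"
  assumes lip: "L-lipschitz_on {a..b} y" and t: "t \<in> {a<..<b}" and D: "DERIV y t :> D"
  shows "\<bar>D\<bar> \<le> L"
proof -
  have lim: "((\<lambda>h. (y (t + h) - y t) / h) \<longlongrightarrow> D) (at 0)"
    using D by (simp add: DERIV_def)
  have "\<forall>\<^sub>F h in at (0::real). t + h \<in> {a<..<b}"
  proof -
    have "\<forall>\<^sub>F x in at t. x \<in> {a<..<b}" using t by (intro eventually_at_in_open') auto
    then show ?thesis unfolding eventually_at_to_0[of _ t] by (simp add: add.commute)
  qed
  then have "\<forall>\<^sub>F h in at 0. norm ((y (t + h) - y t) / h) \<le> L"
  proof (rule eventually_mono)
    fix h :: real assume "t + h \<in> {a<..<b}"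
    then have "\<bar>y (t + h) - y t\<bar> \<le> L * \<bar>h\<bar>"
      using lipschitz_onD[OF lip, of "t + h" t] t by (auto simp: dist_real_def)
    then show "norm ((y (t + h) - y t) / h) \<le> L"
      by (cases "h = 0") (auto simp: abs_divide divide_le_eq lipschitz_on_nonneg[OF lip])
  qed
  from Lim_norm_ubound[OF _ lim this] show ?thesis by simp
qed

text \<open>Where \<open>y\<close> is not differentiable, \<open>deriv y t\<close> is the junk value \<open>SOME D. False\<close>,
  so the bound on the arc length element has to cover it as well.\<close>
definition lipschitz_graph_speed :: "real \<Rightarrow> real" where
  "lipschitz_graph_speed L = sqrt (1 + (max L \<bar>SOME D::real. False\<bar>)\<^sup>2)"

lemma graph_speed_le_lipschitz:
  fixes y :: "real \<Rightarrow> real"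
  assumes lip: "L-lipschitz_on {a..b} y" and t: "t \<in> {a<..<b}"
  shows "sqrt (1 + (deriv y t)\<^sup>2) \<le> lipschitz_graph_speed L"
proof -
  have "\<bar>deriv y t\<bar> \<le> max L \<bar>SOME D::real. False\<bar>"
  proof (cases "\<exists>D. DERIV y t :> D")
    case True
    then obtain D where "DERIV y t :> D" by blast
    then show ?thesis
      using abs_DERIV_le_lipschitz[OF lip t] DERIV_imp_deriv by fastforce
  next
    case False
    then show ?thesis by (simp add: deriv_def)
  qed
  then have "(deriv y t)\<^sup>2 \<le> (max L \<bar>SOME D::real. False\<bar>)\<^sup>2"
    by (metis abs_le_square_iff abs_of_nonneg abs_ge_zero max.coboundedI2)
  then show ?thesis by (simp add: lipschitz_graph_speed_def)
qed

lemma graph_arc_integral_le_lipschitz: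
  fixes y :: "real \<Rightarrow> real"
  assumes lip: "L-lipschitz_on {a..b} y"
    and le: "\<And>t. t \<in> {a<..<b} \<Longrightarrow> h (Complex t (y t)) \<le> g t"
  shows "graph_arc_integral a b y h
    \<le> (\<integral>\<^sup>+ t \<in> {a..b}. ennreal (lipschitz_graph_speed L) * g t \<partial>lborel)"
  unfolding graph_arc_integral_def nn_integral_completion
proof (rule nn_integral_mono_AE)
  have "AE t in lborel. t \<noteq> a \<and> t \<noteq> b"
    using AE_lborel_singleton[of a] AE_lborel_singleton[of b] by eventually_elim auto
  then show "AE t in lborel. h (Complex t (y t)) * ennreal (sqrt (1 + (deriv y t)\<^sup>2)) * indicator {a..b} t
      \<le> ennreal (lipschitz_graph_speed L) * g t * indicator {a..b} t"
  proof (rule eventually_mono)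
    fix t assume "t \<noteq> a \<and> t \<noteq> b"
    then have "t \<in> {a<..<b}" if "t \<in> {a..b}" using that by auto
    then show "h (Complex t (y t)) * ennreal (sqrt (1 + (deriv y t)\<^sup>2)) * indicator {a..b} t
      \<le> ennreal (lipschitz_graph_speed L) * g t * indicator {a..b} t"
      by (auto simp: mult.commute intro!: mult_mono le ennreal_leI graph_speed_le_lipschitz[OF lip]
          split: split_indicator)
  qed
qed

definition ennexp :: "ennreal \<Rightarrow> ennreal" where
  "ennexp x = (if x = \<infinity> then \<infinity> else ennreal (exp (enn2real x)))"

lemma ennexp_ennreal [simp]: "0 \<le> x \<Longrightarrow> ennexp (ennreal x) = ennreal (exp x)"
  by (simp add: ennexp_def)

lemma borel_measurable_ennexp [measurable]: "ennexp \<in> borel_measurable borel"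
  unfolding ennexp_def by measurable

lemma le_ennexp: "x \<le> ennexp x"
  by (cases x) (auto simp: ennexp_def intro!: ennreal_leI order_trans[OF _ exp_ge_add_one_self])

lemma exp_neg_ereal_diff_le_ennexp: "exp_neg_ereal (enn2ereal P - enn2ereal N) \<le> ennexp N"
proof (cases N)
  case (real n)
  then show ?thesis
    by (cases P) (auto simp: exp_neg_ereal_def ennexp_def intro!: ennreal_leI)
qed (simp add: ennexp_def)

text \<open>The tangent line \<open>exp x \<ge> exp m (1 + x - m)\<close>, rearranged to avoid subtraction.\<close>
lemma ennexp_tangent:
  assumes "0 \<le> m"
  shows "ennreal (exp m) * (1 + x) \<le> ennexp x + ennreal (exp m * m)"
proof (cases x)
  case (real r)
  have "exp m * (1 + (r - m)) \<le> exp m * exp (r - m)"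
    by (intro mult_left_mono exp_ge_add_one_self) auto
  then have "exp m * (1 + r) \<le> exp r + exp m * m"
    by (simp add: exp_diff algebra_simps)
  then have "ennreal (exp m * (1 + r)) \<le> ennreal (exp r) + ennreal (exp m * m)"
    using real assms by (simp add: ennreal_plus[symmetric] del: ennreal_plus)
  moreover have "ennreal (exp m * (1 + r)) = ennreal (exp m) * (1 + x)"
    using real by (simp add: ennreal_mult)
  ultimately show ?thesis
    using real by simp
qed (simp add: ennexp_def)

text \<open>Jensen's inequality for \<open>exp\<close> and the probability measure \<open>M/\<beta>\<close>.\<close>
lemma ennexp_nn_integral_le:
  assumes g [measurable]: "g \<in> borel_measurable M"
    and mass: "emeasure M (space M) = ennreal \<beta>" and "0 < \<beta>"
  shows "ennreal \<beta> * ennexp (\<integral>\<^sup>+ x. g x \<partial>M) \<le> (\<integral>\<^sup>+ x. ennexp (ennreal \<beta> * g x) \<partial>M)"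
proof (cases "(\<integral>\<^sup>+ x. g x \<partial>M) = \<infinity>")
  case True
  have "\<infinity> = (\<integral>\<^sup>+ x. ennreal \<beta> * g x \<partial>M)"
    using True \<open>0 < \<beta>\<close> by (simp add: nn_integral_cmult)
  also have "\<dots> \<le> (\<integral>\<^sup>+ x. ennexp (ennreal \<beta> * g x) \<partial>M)"
    by (intro nn_integral_mono le_ennexp)
  finally show ?thesis
    by (simp add: top_unique)
next
  case False
  then obtain m where m: "(\<integral>\<^sup>+ x. g x \<partial>M) = ennreal m" "0 \<le> m"
    by (cases "\<integral>\<^sup>+ x. g x \<partial>M") auto
  have "ennreal (exp m * \<beta>) + ennreal (exp m * m * \<beta>)
      = ennreal (exp m) * (ennreal \<beta> + ennreal \<beta> * ennreal m)"
    using m \<open>0 < \<beta>\<close> by (simp add: distrib_left ennreal_mult mult_ac)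
  also have "\<dots> = (\<integral>\<^sup>+ x. ennreal (exp m) * (1 + ennreal \<beta> * g x) \<partial>M)"
    using m by (simp add: nn_integral_cmult nn_integral_add mass)
  also have "\<dots> \<le> (\<integral>\<^sup>+ x. ennexp (ennreal \<beta> * g x) + ennreal (exp m * m) \<partial>M)"
    by (intro nn_integral_mono ennexp_tangent m(2))
  also have "\<dots> = (\<integral>\<^sup>+ x. ennexp (ennreal \<beta> * g x) \<partial>M) + ennreal (exp m * m * \<beta>)"
    using m \<open>0 < \<beta>\<close> by (simp add: nn_integral_add mass ennreal_mult)
  finally have "ennreal (exp m * \<beta>) \<le> (\<integral>\<^sup>+ x. ennexp (ennreal \<beta> * g x) \<partial>M)"
    by (simp add: add.commute[of _ "ennreal (exp m * m * \<beta>)"])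
  then show ?thesis
    using m \<open>0 < \<beta>\<close> by (simp add: ennreal_mult mult.commute)
qed

text \<open>The value \<open>\<infinity>\<close> at \<open>s = 0\<close> dominates the singularity of the potential at a point of
  the graph; it is harmless because it occupies a null set of \<open>t\<close>.\<close>
definition horizontal_kernel :: "real \<Rightarrow> real \<Rightarrow> ennreal" where
  "horizontal_kernel \<beta> s = (if s = 0 then \<infinity> else ennreal (1 + \<bar>s\<bar> powr - \<beta>))"

lemma borel_measurable_horizontal_kernel [measurable]:
  "horizontal_kernel \<beta> \<in> borel_measurable borel"
  unfolding horizontal_kernel_def by measurable

lemma ennexp_log_dist_le_horizontal_kernel:
  fixes z \<zeta> :: complex
  assumes "0 \<le> \<beta>"
  shows "ennexp (ennreal \<beta> * (if \<zeta> = z then \<infinity> else ennreal (max 0 (- ln (cmod (z - \<zeta>))))))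
    \<le> horizontal_kernel \<beta> (Re z - Re \<zeta>)"
proof (cases "Re z = Re \<zeta>")
  case False
  then have "\<zeta> \<noteq> z" by auto
  define r where "r = cmod (z - \<zeta>)"
  define s where "s = \<bar>Re z - Re \<zeta>\<bar>"
  have "0 < s" "s \<le> r"
    using False abs_Re_le_cmod[of "z - \<zeta>"] by (auto simp: r_def s_def)
  have "exp (\<beta> * max 0 (- ln r)) \<le> 1 + exp (\<beta> * - ln r)"
    by (cases "0 \<le> - ln r") (auto simp: max_def)
  also have "exp (\<beta> * - ln r) = r powr - \<beta>"
    using \<open>0 < s\<close> \<open>s \<le> r\<close> by (simp add: powr_def)
  also have "r powr - \<beta> \<le> s powr - \<beta>"
    using assms \<open>0 < s\<close> \<open>s \<le> r\<close> by (intro powr_mono2') auto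
  finally have "exp (\<beta> * max 0 (- ln r)) \<le> 1 + s powr - \<beta>" by simp
  then have "ennreal (exp (\<beta> * max 0 (- ln r))) \<le> ennreal (1 + s powr - \<beta>)"
    by (rule ennreal_leI)
  then show ?thesis
    using False \<open>\<zeta> \<noteq> z\<close> assms
    by (simp add: horizontal_kernel_def r_def s_def ennreal_mult[symmetric])
qed (simp add: horizontal_kernel_def)

lemma exp_neg_log_potential_le:
  fixes \<mu> :: "complex measure"
  assumes sets: "sets \<mu> = sets borel" and mass: "emeasure \<mu> UNIV = ennreal \<beta>" and "0 < \<beta>"
  shows "exp_neg_ereal (log_potential \<mu> z)
    \<le> ennreal (1 / \<beta>) * (\<integral>\<^sup>+ \<zeta>. horizontal_kernel \<beta> (Re z - Re \<zeta>) \<partial>\<mu>)"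
proof -
  define G where "G \<zeta> = (if \<zeta> = z then \<infinity> else ennreal (max 0 (- ln (cmod (z - \<zeta>)))))" for \<zeta>
  have "G \<in> borel_measurable \<mu>"
    unfolding measurable_cong_sets[OF sets refl] G_def by measurable
  have "exp_neg_ereal (log_potential \<mu> z) \<le> ennexp (\<integral>\<^sup>+ \<zeta>. G \<zeta> \<partial>\<mu>)"
    unfolding log_potential_def G_def by (rule exp_neg_ereal_diff_le_ennexp)
  also have "\<dots> = ennreal (1 / \<beta>) * (ennreal \<beta> * ennexp (\<integral>\<^sup>+ \<zeta>. G \<zeta> \<partial>\<mu>))"
    using \<open>0 < \<beta>\<close> by (simp add: mult.assoc[symmetric] ennreal_mult[symmetric])
  also have "\<dots> \<le> ennreal (1 / \<beta>) * (\<integral>\<^sup>+ \<zeta>. ennexp (ennreal \<beta> * G \<zeta>) \<partial>\<mu>)"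
    using sets_eq_imp_space_eq[OF sets] mass \<open>0 < \<beta>\<close> \<open>G \<in> borel_measurable \<mu>\<close>
    by (intro mult_left_mono ennexp_nn_integral_le) auto
  also have "\<dots> \<le> ennreal (1 / \<beta>) * (\<integral>\<^sup>+ \<zeta>. horizontal_kernel \<beta> (Re z - Re \<zeta>) \<partial>\<mu>)"
    unfolding G_def using \<open>0 < \<beta>\<close>
    by (intro mult_left_mono nn_integral_mono ennexp_log_dist_le_horizontal_kernel) auto
  finally show ?thesis .
qed

lemma nn_integral_abs_powr_le:
  fixes \<beta> :: real
  assumes "\<beta> < 1"
  shows "(\<integral>\<^sup>+ x \<in> {-1..1}. ennreal (\<bar>x\<bar> powr - \<beta>) \<partial>lborel) \<le> ennreal (2 / (1 - \<beta>))"
proof -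
  define f where "f x = ennreal (x powr - \<beta>) * indicator {0..1} x" for x :: real
  have [measurable]: "f \<in> borel_measurable borel"
    unfolding f_def by measurable
  have "((\<lambda>x. x powr - \<beta>) has_integral 1 / (1 - \<beta>)) {0..1}"
    using has_integral_powr_from_0[of "- \<beta>" 1] assms by simp
  then have f_integral: "(\<integral>\<^sup>+ x. f x \<partial>lborel) = ennreal (1 / (1 - \<beta>))"
    unfolding f_def by (intro nn_integral_has_integral_lebesgue') auto
  have "(\<integral>\<^sup>+ x \<in> {-1..1}. ennreal (\<bar>x\<bar> powr - \<beta>) \<partial>lborel)
      \<le> (\<integral>\<^sup>+ x. f x + f (0 + (- 1) * x) \<partial>lborel)"
    by (intro nn_integral_mono) (auto simp: f_def split: split_indicator)
  also have "\<dots> = (\<integral>\<^sup>+ x. f x \<partial>lborel) + (\<integral>\<^sup>+ x. f (0 + (- 1) * x) \<partial>lborel)"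
    by (intro nn_integral_add) auto
  also have "(\<integral>\<^sup>+ x. f (0 + (- 1) * x) \<partial>lborel) = (\<integral>\<^sup>+ x. f x \<partial>lborel)"
    using nn_integral_real_affine[of f "- 1" 0] by simp
  finally show ?thesis
    using assms by (simp add: f_integral ennreal_plus[symmetric] del: ennreal_plus)
qed

lemma nn_integral_horizontal_kernel_le:
  assumes "0 \<le> \<beta>" "\<beta> < 1" "a \<le> b"
  shows "(\<integral>\<^sup>+ t \<in> {a..b}. horizontal_kernel \<beta> (t - c) \<partial>lborel)
    \<le> ennreal (2 * (b - a) + 2 / (1 - \<beta>))"
proof -
  define g where "g x = ennreal (\<bar>x\<bar> powr - \<beta>) * indicator {-1..1} x" for x :: real
  have [measurable]: "g \<in> borel_measurable borel"
    unfolding g_def by measurable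
  have kernel_le: "horizontal_kernel \<beta> s \<le> 2 + g s" if "s \<noteq> 0" for s
  proof -
    have "1 + \<bar>s\<bar> powr - \<beta> \<le> 2 + \<bar>s\<bar> powr - \<beta> * indicator {-1..1} s"
    proof (cases "\<bar>s\<bar> \<le> 1")
      case False
      then have "\<bar>s\<bar> powr - \<beta> \<le> 1 powr - \<beta>"
        using assms by (intro powr_mono2') auto
      then show ?thesis using False by (simp add: indicator_def abs_le_iff)
    qed (auto simp: abs_le_iff)
    then have "ennreal (1 + \<bar>s\<bar> powr - \<beta>) \<le> ennreal (2 + \<bar>s\<bar> powr - \<beta> * indicator {-1..1} s)"
      by (rule ennreal_leI)
    then show ?thesis
      using that by (auto simp: horizontal_kernel_def g_def split: split_indicator)
  qed
  have "AE t in lborel. horizontal_kernel \<beta> (t - c) * indicator {a..b} t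
      \<le> 2 * indicator {a..b} t + g (t - c)"
    using AE_lborel_singleton[of c]
    by eventually_elim (use kernel_le in \<open>auto split: split_indicator\<close>)
  then have "(\<integral>\<^sup>+ t \<in> {a..b}. horizontal_kernel \<beta> (t - c) \<partial>lborel)
      \<le> (\<integral>\<^sup>+ t. 2 * indicator {a..b} t + g (t - c) \<partial>lborel)"
    by (rule nn_integral_mono_AE)
  also have "\<dots> = ennreal (2 * (b - a)) + (\<integral>\<^sup>+ t. g t \<partial>lborel)"
    using assms nn_integral_real_affine[of g 1 "- c"]
    by (simp add: nn_integral_add nn_integral_cmult_indicator add.commute ennreal_mult
        del: right_diff_distrib_numeral)
  also have "(\<integral>\<^sup>+ t. g t \<partial>lborel) \<le> ennreal (2 / (1 - \<beta>))"
    unfolding g_def using assms by (intro nn_integral_abs_powr_le)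
  finally show ?thesis
    using assms by (simp add: ennreal_plus[symmetric] del: ennreal_plus)
qed

lemma borel_measurable_horizontal_kernel_integral:
  fixes \<mu> :: "complex measure"
  assumes "finite_measure \<mu>" and sets: "sets \<mu> = sets borel"
  shows "(\<lambda>t. \<integral>\<^sup>+ \<zeta>. horizontal_kernel \<beta> (t - Re \<zeta>) \<partial>\<mu>) \<in> borel_measurable borel"
proof -
  interpret finite_measure \<mu> by fact
  have eq: "borel_measurable (borel \<Otimes>\<^sub>M \<mu>) = borel_measurable (borel \<Otimes>\<^sub>M borel)"
    by (intro measurable_cong_sets sets_pair_measure_cong) (simp_all add: sets)
  have "(\<lambda>(t, \<zeta>). horizontal_kernel \<beta> (t - Re \<zeta>)) \<in> borel_measurable (borel \<Otimes>\<^sub>M \<mu>)"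
    unfolding eq by measurable
  then show ?thesis
    by (rule borel_measurable_nn_integral_fst[where f="\<lambda>(t, \<zeta>). _ t \<zeta>", simplified])
qed

lemma nn_integral_horizontal_kernel_integral_le:
  fixes \<mu> :: "complex measure"
  assumes "finite_measure \<mu>" and sets: "sets \<mu> = sets borel"
    and "0 \<le> \<beta>" "\<beta> < 1" "a \<le> b"
  shows "(\<integral>\<^sup>+ t \<in> {a..b}. (\<integral>\<^sup>+ \<zeta>. horizontal_kernel \<beta> (t - Re \<zeta>) \<partial>\<mu>) \<partial>lborel)
    \<le> emeasure \<mu> (space \<mu>) * ennreal (2 * (b - a) + 2 / (1 - \<beta>))"
proof -
  interpret finite_measure \<mu> by fact
  interpret pair_sigma_finite lborel \<mu> ..
  define H where "H t \<zeta> = horizontal_kernel \<beta> (t - Re \<zeta>) * indicator {a..b} t" for t \<zeta>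
  have eq: "borel_measurable (lborel \<Otimes>\<^sub>M \<mu>) = borel_measurable (borel \<Otimes>\<^sub>M borel)"
    by (intro measurable_cong_sets sets_pair_measure_cong) (simp_all add: sets)
  have H_measurable: "(\<lambda>(t, \<zeta>). H t \<zeta>) \<in> borel_measurable (lborel \<Otimes>\<^sub>M \<mu>)"
    unfolding eq H_def by measurable
  have "(\<integral>\<^sup>+ t \<in> {a..b}. (\<integral>\<^sup>+ \<zeta>. horizontal_kernel \<beta> (t - Re \<zeta>) \<partial>\<mu>) \<partial>lborel)
      = (\<integral>\<^sup>+ t. (\<integral>\<^sup>+ \<zeta>. H t \<zeta> \<partial>\<mu>) \<partial>lborel)"
  proof (intro nn_integral_cong)
    fix t
    have "(\<lambda>\<zeta>. horizontal_kernel \<beta> (t - Re \<zeta>)) \<in> borel_measurable \<mu>"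
      unfolding measurable_cong_sets[OF sets refl] by measurable
    then show "(\<integral>\<^sup>+ \<zeta>. horizontal_kernel \<beta> (t - Re \<zeta>) \<partial>\<mu>) * indicator {a..b} t
        = (\<integral>\<^sup>+ \<zeta>. H t \<zeta> \<partial>\<mu>)"
      by (simp add: H_def nn_integral_multc)
  qed
  also have "\<dots> = (\<integral>\<^sup>+ \<zeta>. (\<integral>\<^sup>+ t \<in> {a..b}. horizontal_kernel \<beta> (t - Re \<zeta>) \<partial>lborel) \<partial>\<mu>)"
    using Fubini'[OF H_measurable] by (simp add: H_def)
  also have "\<dots> \<le> (\<integral>\<^sup>+ \<zeta>. ennreal (2 * (b - a) + 2 / (1 - \<beta>)) \<partial>\<mu>)"
    using assms by (intro nn_integral_mono nn_integral_horizontal_kernel_le)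
  finally show ?thesis
    by (simp add: mult.commute)
qed

lemma log_potential_null_measure:
  assumes "emeasure \<mu> (space \<mu>) = 0"
  shows "log_potential \<mu> z = 0"
proof -
  have "(\<integral>\<^sup>+ \<zeta>. f \<zeta> \<partial>\<mu>) = 0" for f :: "complex \<Rightarrow> ennreal"
    using nn_integral_mono[of \<mu> f "\<lambda>_. \<infinity>"] assms by simp
  then show ?thesis
    by (simp add: log_potential_def)
qed

lemma graph_arc_integral_exp_neg_log_potential_le:
  fixes y :: "real \<Rightarrow> real" and \<mu> :: "complex measure"
  assumes "a \<le> b" "0 \<le> \<beta>" "\<beta> < 1" and lip: "L-lipschitz_on {a..b} y"
    and sets: "sets \<mu> = sets borel" and mass: "emeasure \<mu> UNIV = ennreal \<beta>"
  shows "graph_arc_integral a b y (\<lambda>z. exp_neg_ereal (log_potential \<mu> z))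
    \<le> ennreal (lipschitz_graph_speed L * (2 * (b - a) + 2 / (1 - \<beta>)))"
proof -
  define S where "S = lipschitz_graph_speed L"
  define K where "K = 2 * (b - a) + 2 / (1 - \<beta>)"
  have "0 \<le> S"
    by (simp add: S_def lipschitz_graph_speed_def)
  have "0 \<le> 2 / (1 - \<beta>)"
    using assms by simp
  then have "b - a \<le> K"
    using \<open>a \<le> b\<close> unfolding K_def by (smt (verit))
  have space: "space \<mu> = UNIV"
    using sets_eq_imp_space_eq[OF sets] by simp
  show ?thesis
  proof (cases "\<beta> = 0")
    case True
    have "exp_neg_ereal 0 = 1"
      by (simp add: exp_neg_ereal_def zero_ereal_def)
    then have "exp_neg_ereal (log_potential \<mu> z) = 1" for z
      using mass True by (simp add: log_potential_null_measure space)
    then have "graph_arc_integral a b y (\<lambda>z. exp_neg_ereal (log_potential \<mu> z))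
        \<le> (\<integral>\<^sup>+ t \<in> {a..b}. ennreal S * 1 \<partial>lborel)"
      unfolding S_def by (intro graph_arc_integral_le_lipschitz[OF lip]) simp
    also have "\<dots> = ennreal (S * (b - a))"
      using assms \<open>0 \<le> S\<close> by (simp add: nn_integral_cmult_indicator ennreal_mult)
    also have "\<dots> \<le> ennreal (S * K)"
      using \<open>0 \<le> S\<close> \<open>b - a \<le> K\<close> by (intro ennreal_leI mult_left_mono)
    finally show ?thesis by (simp add: S_def K_def)
  next
    case False
    then have "0 < \<beta>" using assms by simp
    have "finite_measure \<mu>"
      by (rule finite_measureI) (simp add: space mass)
    define F where "F t = (\<integral>\<^sup>+ \<zeta>. horizontal_kernel \<beta> (t - Re \<zeta>) \<partial>\<mu>)" for t
    have "graph_arc_integral a b y (\<lambda>z. exp_neg_ereal (log_potential \<mu> z))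
        \<le> (\<integral>\<^sup>+ t \<in> {a..b}. ennreal S * (ennreal (1 / \<beta>) * F t) \<partial>lborel)"
      unfolding S_def F_def
      by (intro graph_arc_integral_le_lipschitz[OF lip]
          order_trans[OF exp_neg_log_potential_le[OF sets mass \<open>0 < \<beta>\<close>]]) simp
    also have "\<dots> = (\<integral>\<^sup>+ t. ennreal (S / \<beta>) * (F t * indicator {a..b} t) \<partial>lborel)"
    proof -
      have "ennreal (S / \<beta>) = ennreal S * ennreal (1 / \<beta>)"
        using \<open>0 \<le> S\<close> \<open>0 < \<beta>\<close> by (subst ennreal_mult[symmetric]) auto
      then show ?thesis by (simp add: mult.assoc)
    qed
    also have "\<dots> = ennreal (S / \<beta>) * (\<integral>\<^sup>+ t \<in> {a..b}. F t \<partial>lborel)"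
      using borel_measurable_horizontal_kernel_integral[OF \<open>finite_measure \<mu>\<close> sets]
      unfolding F_def by (intro nn_integral_cmult) simp
    also have "\<dots> \<le> ennreal (S / \<beta>) * (ennreal \<beta> * ennreal K)"
      using nn_integral_horizontal_kernel_integral_le[OF \<open>finite_measure \<mu>\<close> sets assms(2,3,1)]
      by (intro mult_left_mono) (simp_all add: F_def K_def space mass)
    also have "\<dots> = ennreal (S * K)"
      using \<open>0 \<le> S\<close> \<open>0 < \<beta>\<close> \<open>b - a \<le> K\<close> assms
      by (simp add: ennreal_mult[symmetric] mult_ac)
    finally show ?thesis by (simp add: S_def K_def)
  qed
qed

theorem theorem2p9:
  fixes a b L \<beta> :: real
  assumes "a < b" and "0 \<le> \<beta>" and "\<beta> < 1"
  shows "\<exists>C>0. \<forall>(y :: real \<Rightarrow> real) (\<mu> :: complex measure) (U :: complex set).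
           L-lipschitz_on {a..b} y \<and> open U \<and> (\<forall>t\<in>{a..b}. Complex t (y t) \<in> U) \<and>
           sets \<mu> = sets borel \<and> emeasure \<mu> UNIV = ennreal \<beta> \<and> emeasure \<mu> (- U) = 0
           \<longrightarrow> graph_arc_integral a b y (\<lambda>z. exp_neg_ereal (log_potential \<mu> z)) < ennreal C"
proof -
  \<comment> \<open>The bound holds for every measure of mass \<open>\<beta>\<close>.\<close>
  define B where "B = lipschitz_graph_speed L * (2 * (b - a) + 2 / (1 - \<beta>))"
  have "0 \<le> B"
    using assms by (simp add: B_def lipschitz_graph_speed_def)
  have "graph_arc_integral a b y (\<lambda>z. exp_neg_ereal (log_potential \<mu> z)) < ennreal (B + 1)"
    if "L-lipschitz_on {a..b} y" "sets \<mu> = sets borel" "emeasure \<mu> UNIV = ennreal \<beta>"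
    for y \<mu>
  proof -
    have "graph_arc_integral a b y (\<lambda>z. exp_neg_ereal (log_potential \<mu> z)) \<le> ennreal B"
      unfolding B_def using assms that
      by (intro graph_arc_integral_exp_neg_log_potential_le) auto
    also have "\<dots> < ennreal (B + 1)"
      using \<open>0 \<le> B\<close> by (simp add: ennreal_less_iff)
    finally show ?thesis .
  qed
  moreover have "0 < B + 1"
    using \<open>0 \<le> B\<close> by simp
  ultimately show ?thesis
    by blast
qed
end
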